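(* Let $G$ be a finitely generated group with decidable word problem and $S$ a finite generating set of $G$. Then the ouroboros problem for $(G,S)$ is in $\Sigma^0_1$.
   Context: The word problem of $G$ with respect to $S$ asks, given a word $w$ over $S\cup S^{-1}$, whether $w$ represents $1_G$. A tileset graph for $(G,S)$ is a finite multigraph $\Gamma=(A,B)$ whose edges are triples $(a,a',s)$ with $a,a'\in A$, $s\in S\cup S^{-1}$, such that $(a,a',s)\in B$ implies $(a',a,s^{-1})\in B$. A $\Gamma$-ouroboros is a pair $(\omega,\zeta)$ with $\omega:\{0,\dots,n\}\to G$, $n\ge 3$, injective on $\{0,\dots,n-1\}$ with $\omega(n)=\omega(0)$, and $\zeta:\{0,\dots,n\}\to A$, such that for $0\le i<n$: $d\omega_i:=\omega(i)^{-1}\omega(i+1)\in S\cup S^{-1}$ and $(\zeta(i),\zeta(i+1),d\omega_i)\in B$. The ouroboros problem for $(G,S)$: given $\Gamma$, decide whether a $\Gamma$-ouroboros exists. *)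

theory Defs
  imports "HOL-Algebra.Generated_Groups" "HOL-Library.Nat_Bijection"
begin

datatype recf =
    Zero
  | Succ
  | Proj nat
  | Comp recf "recf list"
  | PrimRec recf recf
  | Minim recf

inductive rec_eval :: "recf \<Rightarrow> nat list \<Rightarrow> nat \<Rightarrow> bool" where
  zero: "rec_eval Zero xs 0"
| succ: "rec_eval Succ (x # xs) (Suc x)"
| proj: "i < length xs \<Longrightarrow> rec_eval (Proj i) xs (xs ! i)"
| comp: "list_all2 (\<lambda>g y. rec_eval g xs y) gs ys \<Longrightarrow> rec_eval f ys z
          \<Longrightarrow> rec_eval (Comp f gs) xs z"
| pr0: "rec_eval f xs y \<Longrightarrow> rec_eval (PrimRec f g) (0 # xs) y"
| prS: "rec_eval (PrimRec f g) (n # xs) y \<Longrightarrow> rec_eval g (n # y # xs) z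
          \<Longrightarrow> rec_eval (PrimRec f g) (Suc n # xs) z"
| mn: "rec_eval f (n # xs) 0 \<Longrightarrow> (\<forall>k<n. \<exists>m. rec_eval f (k # xs) (Suc m))
          \<Longrightarrow> rec_eval (Minim f) xs n"

definition computable :: "(nat \<Rightarrow> nat) \<Rightarrow> bool" where
  "computable h \<longleftrightarrow> (\<exists>r. \<forall>x. rec_eval r [x] (h x))"

definition decidable_set :: "nat set \<Rightarrow> bool" where
  "decidable_set A \<longleftrightarrow> computable (\<lambda>x. if x \<in> A then 1 else 0)"

definition sigma01 :: "nat set \<Rightarrow> bool" where
  "sigma01 A \<longleftrightarrow> (\<exists>R. decidable_set R \<and> (\<forall>x. x \<in> A \<longleftrightarrow> (\<exists>y. prod_encode (x, y) \<in> R)))"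

definition valid_letter :: "'a list \<Rightarrow> nat \<Rightarrow> bool" where
  "valid_letter gens k \<longleftrightarrow> k div 2 < length gens"

definition letter_val :: "('a, 'b) monoid_scheme \<Rightarrow> 'a list \<Rightarrow> nat \<Rightarrow> 'a" where
  "letter_val G gens k =
     (if even k then gens ! (k div 2) else inv\<^bsub>G\<^esub> (gens ! (k div 2)))"

definition word_val :: "('a, 'b) monoid_scheme \<Rightarrow> 'a list \<Rightarrow> nat list \<Rightarrow> 'a" where
  "word_val G gens w = foldr (\<lambda>k x. letter_val G gens k \<otimes>\<^bsub>G\<^esub> x) w \<one>\<^bsub>G\<^esub>"

definition word_problem :: "('a, 'b) monoid_scheme \<Rightarrow> 'a list \<Rightarrow> nat set" where
  "word_problem G gens =
     {c. (\<forall>k \<in> set (list_decode c). valid_letter gens k) \<and>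
         word_val G gens (list_decode c) = \<one>\<^bsub>G\<^esub>}"

definition tileset_graph ::
  "('a, 'b) monoid_scheme \<Rightarrow> 'a set \<Rightarrow> 't set \<Rightarrow> ('t \<times> 't \<times> 'a) set \<Rightarrow> bool" where
  "tileset_graph G S A B \<longleftrightarrow>
     finite A \<and> finite B \<and> B \<subseteq> A \<times> A \<times> (S \<union> m_inv G ` S) \<and>
     (\<forall>a a' s. (a, a', s) \<in> B \<longrightarrow> (a', a, inv\<^bsub>G\<^esub> s) \<in> B)"

definition is_ouroboros ::
  "('a, 'b) monoid_scheme \<Rightarrow> 'a set \<Rightarrow> 't set \<Rightarrow> ('t \<times> 't \<times> 'a) set \<Rightarrow>
   nat \<Rightarrow> (nat \<Rightarrow> 'a) \<Rightarrow> (nat \<Rightarrow> 't) \<Rightarrow> bool" where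
  "is_ouroboros G S A B n \<omega> \<zeta> \<longleftrightarrow>
     n \<ge> 3 \<and> (\<forall>i\<le>n. \<omega> i \<in> carrier G) \<and> inj_on \<omega> {0..<n} \<and> \<omega> n = \<omega> 0 \<and>
     (\<forall>i\<le>n. \<zeta> i \<in> A) \<and>
     (\<forall>i<n. inv\<^bsub>G\<^esub> (\<omega> i) \<otimes>\<^bsub>G\<^esub> \<omega> (Suc i) \<in> S \<union> m_inv G ` S \<and>
            (\<zeta> i, \<zeta> (Suc i), inv\<^bsub>G\<^esub> (\<omega> i) \<otimes>\<^bsub>G\<^esub> \<omega> (Suc i)) \<in> B)"

definition has_ouroboros ::
  "('a, 'b) monoid_scheme \<Rightarrow> 'a set \<Rightarrow> 't set \<Rightarrow> ('t \<times> 't \<times> 'a) set \<Rightarrow> bool" where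
  "has_ouroboros G S A B \<longleftrightarrow> (\<exists>n \<omega> \<zeta>. is_ouroboros G S A B n \<omega> \<zeta>)"

text \<open>A code c decodes to (m, e): tiles are {0..<m}; e is the code of a list of edge codes,
  each edge code decoding to (a, (a', k)) with letter code k.\<close>

definition edge_decode :: "nat \<Rightarrow> nat \<times> nat \<times> nat" where
  "edge_decode d = (let (a, r) = prod_decode d; (a', k) = prod_decode r in (a, a', k))"

definition code_edges :: "nat \<Rightarrow> (nat \<times> nat \<times> nat) list" where
  "code_edges c = map edge_decode (list_decode (snd (prod_decode c)))"

definition code_tiles :: "nat \<Rightarrow> nat set" where
  "code_tiles c = {0..<fst (prod_decode c)}"

definition valid_code :: "'a list \<Rightarrow> nat \<Rightarrow> bool" where
  "valid_code gens c \<longleftrightarrow>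
     (\<forall>(a, a', k) \<in> set (code_edges c).
        a \<in> code_tiles c \<and> a' \<in> code_tiles c \<and> valid_letter gens k)"

definition code_graph :: "('a, 'b) monoid_scheme \<Rightarrow> 'a list \<Rightarrow> nat \<Rightarrow> (nat \<times> nat \<times> 'a) set" where
  "code_graph G gens c = (\<lambda>(a, a', k). (a, a', letter_val G gens k)) ` set (code_edges c)"

definition ouroboros_problem :: "('a, 'b) monoid_scheme \<Rightarrow> 'a list \<Rightarrow> nat set" where
  "ouroboros_problem G gens =
     {c. valid_code gens c \<and>
         tileset_graph G (set gens) (code_tiles c) (code_graph G gens c) \<and>
         has_ouroboros G (set gens) (code_tiles c) (code_graph G gens c)}"

end

theory Submission
  imports Defs
begin

text \<open>An ouroboros is certified by finite data: the tiles \<open>\<zeta>(0), \<dots>, \<zeta>(n)\<close> and, for every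
  step, an edge of \<open>\<Gamma>\<close> carrying a letter of \<open>S \<union> S\<inverse>\<close>. The word \<open>w\<close> formed by these letters
  recovers \<open>\<omega>\<close> up to left translation as its prefix values, so the path closes up iff
  \<open>w = 1\<close> in \<open>G\<close>, and \<open>\<omega>\<close> is injective on \<open>{0, \<dots>, n-1}\<close> iff no segment \<open>w[i..j)\<close> with
  \<open>i < j < n\<close> is trivial. Given a decider for the word problem, all of this, as well as
  the well-formedness and the symmetry of the coded graph, is decidable; hence the ouroboros
  problem is the projection of a decidable relation. In Kleene's model this decidability
  comes from the closure of decidable predicates under the boolean connectives, bounded
  quantifiers and the basic operations on coded lists.\<close>

section \<open>Computable functions of several arguments\<close>

definition computable_n :: "nat \<Rightarrow> (nat list \<Rightarrow> nat) \<Rightarrow> bool" where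
  "computable_n n f \<longleftrightarrow> (\<exists>r. \<forall>xs. length xs = n \<longrightarrow> rec_eval r xs (f xs))"

lemma computable_n_cong:
  "computable_n n f \<Longrightarrow> (\<And>xs. length xs = n \<Longrightarrow> f xs = g xs) \<Longrightarrow> computable_n n g"
  unfolding computable_n_def by metis

lemma computable_n_zero: "computable_n n (\<lambda>_. 0)"
  unfolding computable_n_def using rec_eval.zero by blast

lemma computable_n_Succ: "computable_n 1 (\<lambda>xs. Suc (hd xs))"
  unfolding computable_n_def
  by (rule exI[of _ Succ]) (auto simp: length_Suc_conv intro: rec_eval.succ)

lemma computable_n_proj: "i < n \<Longrightarrow> computable_n n (\<lambda>xs. xs ! i)"
  unfolding computable_n_def using rec_eval.proj by auto

lemma computable_n_hd: "computable_n 1 hd"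
  by (rule computable_n_cong[OF computable_n_proj[of 0]]) (auto simp: length_Suc_conv)

lemma computable_n_list:
  assumes "\<forall>g\<in>set gs. computable_n n g"
  shows "\<exists>rs. \<forall>xs. length xs = n \<longrightarrow> list_all2 (\<lambda>r y. rec_eval r xs y) rs (map (\<lambda>g. g xs) gs)"
  using assms
proof (induction gs)
  case (Cons g gs)
  then obtain rs where "\<forall>xs. length xs = n \<longrightarrow> list_all2 (\<lambda>r y. rec_eval r xs y) rs (map (\<lambda>g. g xs) gs)"
    by auto
  moreover obtain r where "\<forall>xs. length xs = n \<longrightarrow> rec_eval r xs (g xs)"
    using Cons.prems unfolding computable_n_def by auto
  ultimately show ?case by (intro exI[of _ "r # rs"]) auto
qed simp

lemma computable_n_comp:
  assumes "computable_n (length gs) f" and "\<forall>g\<in>set gs. computable_n n g"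
  shows "computable_n n (\<lambda>xs. f (map (\<lambda>g. g xs) gs))"
proof -
  obtain rf where "\<forall>ys. length ys = length gs \<longrightarrow> rec_eval rf ys (f ys)"
    using assms(1) unfolding computable_n_def by blast
  moreover obtain rs where "\<forall>xs. length xs = n \<longrightarrow> list_all2 (\<lambda>r y. rec_eval r xs y) rs (map (\<lambda>g. g xs) gs)"
    using computable_n_list[OF assms(2)] by blast
  ultimately have "rec_eval (Comp rf rs) xs (f (map (\<lambda>g. g xs) gs))" if "length xs = n" for xs
    using that by (intro rec_eval.comp) auto
  then show ?thesis unfolding computable_n_def by blast
qed

lemma computable_n_comp1:
  "computable_n 1 (\<lambda>xs. F (hd xs)) \<Longrightarrow> computable_n n g \<Longrightarrow> computable_n n (\<lambda>xs. F (g xs))"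
  using computable_n_comp[of "[g]" "\<lambda>xs. F (hd xs)" n] by simp

lemma computable_n_comp2:
  assumes "computable_n 2 (\<lambda>xs. F (xs ! 0) (xs ! 1))" "computable_n n f" "computable_n n g"
  shows "computable_n n (\<lambda>xs. F (f xs) (g xs))"
  using computable_n_comp[of "[f, g]" "\<lambda>xs. F (xs ! 0) (xs ! 1)" n] assms by (simp add: numeral_2_eq_2)

lemma computable_n_Suc: "computable_n n f \<Longrightarrow> computable_n n (\<lambda>xs. Suc (f xs))"
  using computable_n_comp1[OF computable_n_Succ] .

lemma computable_n_const: "computable_n n (\<lambda>_. c)"
  by (induction c) (auto intro: computable_n_zero computable_n_Suc)

lemma computable_n_rec_nat:
  assumes "computable_n n f" and "computable_n (Suc (Suc n)) g"
  shows "computable_n (Suc n) (\<lambda>xs. rec_nat (f (tl xs)) (\<lambda>k y. g (k # y # tl xs)) (hd xs))"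
proof -
  obtain rf where rf: "\<forall>xs. length xs = n \<longrightarrow> rec_eval rf xs (f xs)"
    using assms(1) unfolding computable_n_def by blast
  obtain rg where rg: "\<forall>xs. length xs = Suc (Suc n) \<longrightarrow> rec_eval rg xs (g xs)"
    using assms(2) unfolding computable_n_def by blast
  have "rec_eval (PrimRec rf rg) (k # xs) (rec_nat (f xs) (\<lambda>k y. g (k # y # xs)) k)"
    if "length xs = n" for k xs
    by (induction k) (use rf rg that in \<open>auto intro: rec_eval.pr0 rec_eval.prS\<close>)
  then show ?thesis
    unfolding computable_n_def by (intro exI[of _ "PrimRec rf rg"]) (auto simp: length_Suc_conv)
qed

lemma computable_n_rec_nat2:
  assumes "computable_n 1 (\<lambda>ys. b (hd ys))" and "computable_n 3 (\<lambda>ys. s (ys ! 0) (ys ! 1) (ys ! 2))"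
  shows "computable_n 2 (\<lambda>xs. rec_nat (b (xs ! 1)) (\<lambda>k y. s k y (xs ! 1)) (xs ! 0))"
proof -
  have "computable_n (Suc (Suc 0)) (\<lambda>xs. rec_nat (b (hd (tl xs)))
      (\<lambda>k y. s ((k # y # tl xs) ! 0) ((k # y # tl xs) ! 1) ((k # y # tl xs) ! 2)) (hd xs))"
    using assms by (intro computable_n_rec_nat) (simp_all add: numeral_3_eq_3)
  then show ?thesis
    unfolding numeral_2_eq_2 by (rule computable_n_cong) (auto simp: length_Suc_conv)
qed

lemma computable_n_Least:
  assumes "computable_n (Suc n) f" and "\<And>xs. length xs = n \<Longrightarrow> \<exists>k. f (k # xs) = 0"
  shows "computable_n n (\<lambda>xs. LEAST k. f (k # xs) = 0)"
proof -
  obtain r where r: "\<forall>xs. length xs = Suc n \<longrightarrow> rec_eval r xs (f xs)"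
    using assms(1) unfolding computable_n_def by blast
  have "rec_eval (Minim r) xs (LEAST k. f (k # xs) = 0)" if "length xs = n" for xs
  proof (rule rec_eval.mn)
    show "rec_eval r ((LEAST k. f (k # xs) = 0) # xs) 0"
      using r that LeastI_ex[OF assms(2)[OF that]] by (metis length_Cons)
    show "\<forall>k<(LEAST k. f (k # xs) = 0). \<exists>m. rec_eval r (k # xs) (Suc m)"
    proof (intro allI impI)
      fix k assume "k < (LEAST k. f (k # xs) = 0)"
      then have "f (k # xs) = Suc (f (k # xs) - 1)" using not_less_Least by fastforce
      then show "\<exists>m. rec_eval r (k # xs) (Suc m)" using r that by (metis length_Cons)
    qed
  qed
  then show ?thesis unfolding computable_n_def by blast
qed

lemma computable_n_add: "computable_n n f \<Longrightarrow> computable_n n g \<Longrightarrow> computable_n n (\<lambda>xs. f xs + g xs)"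
proof (rule computable_n_comp2[of "(+)"])
  have "rec_nat b (\<lambda>k y. Suc y) a = a + b" for a b :: nat by (induction a) auto
  moreover have "computable_n 2 (\<lambda>xs. rec_nat (xs ! 1) (\<lambda>k y. Suc y) (xs ! 0))"
    by (rule computable_n_rec_nat2[of "\<lambda>x. x" "\<lambda>k y _. Suc y"])
      (intro computable_n_hd computable_n_Suc computable_n_proj; simp)+
  ultimately show "computable_n 2 (\<lambda>xs. xs ! 0 + xs ! 1)" by simp
qed

lemma computable_n_pred: "computable_n 1 (\<lambda>xs. hd xs - 1)"
proof -
  have "rec_nat 0 (\<lambda>k y. k) a = a - 1" for a :: nat by (cases a) auto
  moreover have "computable_n (Suc 0) (\<lambda>xs. rec_nat 0 (\<lambda>k y. (k # y # tl xs) ! 0) (hd xs))"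
    by (intro computable_n_rec_nat computable_n_zero computable_n_proj) simp
  ultimately show ?thesis by simp
qed

lemma computable_n_diff: "computable_n n f \<Longrightarrow> computable_n n g \<Longrightarrow> computable_n n (\<lambda>xs. f xs - g xs)"
proof (rule computable_n_comp2[of "(-)"])
  have "rec_nat b (\<lambda>k y. y - 1) a = b - a" for a b :: nat by (induction a) auto
  moreover have "computable_n 2 (\<lambda>xs. rec_nat (xs ! 1) (\<lambda>k y. y - 1) (xs ! 0))"
    by (rule computable_n_rec_nat2[of "\<lambda>x. x" "\<lambda>k y _. y - 1"])
      (intro computable_n_hd computable_n_comp1[OF computable_n_pred] computable_n_proj; simp)+
  ultimately have "computable_n 2 (\<lambda>xs. xs ! 1 - xs ! 0)" by simp
  then show "computable_n 2 (\<lambda>xs. xs ! 0 - xs ! 1)"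
    by (rule computable_n_comp2[of "\<lambda>a b. b - a"]) (intro computable_n_proj; simp)+
qed

lemma computable_n_mult: "computable_n n f \<Longrightarrow> computable_n n g \<Longrightarrow> computable_n n (\<lambda>xs. f xs * g xs)"
proof (rule computable_n_comp2[of "(*)"])
  have "rec_nat 0 (\<lambda>k y. y + b) a = a * b" for a b :: nat by (induction a) auto
  moreover have "computable_n 2 (\<lambda>xs. rec_nat 0 (\<lambda>k y. y + xs ! 1) (xs ! 0))"
    by (rule computable_n_rec_nat2[of "\<lambda>_. 0" "\<lambda>k y x. y + x"])
      (intro computable_n_zero computable_n_add computable_n_proj; simp)+
  ultimately show "computable_n 2 (\<lambda>xs. xs ! 0 * xs ! 1)" by simp
qed

lemma computable_n_triangle: "computable_n n f \<Longrightarrow> computable_n n (\<lambda>xs. triangle (f xs))"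
proof -
  have "rec_nat 0 (\<lambda>k y. y + Suc k) a = triangle a" for a by (induction a) auto
  moreover have "computable_n (Suc 0)
      (\<lambda>xs. rec_nat 0 (\<lambda>k y. (k # y # tl xs) ! 1 + Suc ((k # y # tl xs) ! 0)) (hd xs))"
    by (intro computable_n_rec_nat computable_n_zero computable_n_add computable_n_Suc computable_n_proj) simp_all
  ultimately have "computable_n 1 (\<lambda>xs. triangle (hd xs))" by simp
  then show "computable_n n f \<Longrightarrow> computable_n n (\<lambda>xs. triangle (f xs))"
    by (rule computable_n_comp1)
qed

lemma computable_n_prod_encode:
  "computable_n n f \<Longrightarrow> computable_n n g \<Longrightarrow> computable_n n (\<lambda>xs. prod_encode (f xs, g xs))"
  unfolding prod_encode_def case_prod_conv by (intro computable_n_add computable_n_triangle)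

section \<open>Unary computable functions and decidable predicates\<close>

lemma computable_iff_computable_n: "computable f \<longleftrightarrow> computable_n 1 (\<lambda>xs. f (hd xs))"
proof
  assume "computable f"
  then obtain r where "\<forall>x. rec_eval r [x] (f x)" unfolding computable_def by blast
  then show "computable_n 1 (\<lambda>xs. f (hd xs))"
    unfolding computable_n_def by (intro exI[of _ r]) (auto simp: length_Suc_conv)
next
  assume "computable_n 1 (\<lambda>xs. f (hd xs))"
  then obtain r where "\<forall>xs. length xs = 1 \<longrightarrow> rec_eval r xs (f (hd xs))"
    unfolding computable_n_def by blast
  then have "rec_eval r [x] (f x)" for x by (metis One_nat_def length_Cons list.sel(1) list.size(3))
  then show "computable f" unfolding computable_def by blast
qed

lemma computable_comp: "computable f \<Longrightarrow> computable g \<Longrightarrow> computable (\<lambda>x. f (g x))"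
  unfolding computable_iff_computable_n by (rule computable_n_comp1)

lemma computable_comp2:
  "computable_n 2 (\<lambda>xs. F (xs ! 0) (xs ! 1)) \<Longrightarrow> computable f \<Longrightarrow> computable g \<Longrightarrow>
   computable (\<lambda>x. F (f x) (g x))"
  unfolding computable_iff_computable_n by (rule computable_n_comp2)

lemma computable_id: "computable (\<lambda>x. x)"
  unfolding computable_iff_computable_n by (rule computable_n_hd)

lemma computable_const: "computable (\<lambda>_. c)"
  unfolding computable_iff_computable_n by (rule computable_n_const)

lemma computable_Suc: "computable f \<Longrightarrow> computable (\<lambda>x. Suc (f x))"
  unfolding computable_iff_computable_n by (rule computable_n_Suc)

lemma computable_add: "computable f \<Longrightarrow> computable g \<Longrightarrow> computable (\<lambda>x. f x + g x)"
  unfolding computable_iff_computable_n by (rule computable_n_add)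

lemma computable_diff: "computable f \<Longrightarrow> computable g \<Longrightarrow> computable (\<lambda>x. f x - g x)"
  unfolding computable_iff_computable_n by (rule computable_n_diff)

lemma computable_mult: "computable f \<Longrightarrow> computable g \<Longrightarrow> computable (\<lambda>x. f x * g x)"
  unfolding computable_iff_computable_n by (rule computable_n_mult)

lemma computable_min: "computable f \<Longrightarrow> computable g \<Longrightarrow> computable (\<lambda>x. min (f x) (g x))"
proof -
  assume "computable f" "computable g"
  then have "computable (\<lambda>x. f x - (f x - g x))" by (intro computable_diff)
  moreover have "a - (a - b) = min a b" for a b :: nat by simp
  ultimately show ?thesis by simp
qed

lemma computable_triangle: "computable f \<Longrightarrow> computable (\<lambda>x. triangle (f x))"
  unfolding computable_iff_computable_n by (rule computable_n_triangle)

lemma computable_prod_encode: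
  "computable f \<Longrightarrow> computable g \<Longrightarrow> computable (\<lambda>x. prod_encode (f x, g x))"
  unfolding computable_iff_computable_n by (rule computable_n_prod_encode)

lemma computable_funpow:
  assumes "computable f" "computable k" "computable p"
  shows "computable (\<lambda>x. (f ^^ k x) (p x))"
proof -
  have "rec_nat a (\<lambda>_. f) n = (f ^^ n) a" for n a by (induction n) auto
  moreover have "computable_n 3 (\<lambda>ys. f (ys ! 1))"
    using assms(1) unfolding computable_iff_computable_n
    by (rule computable_n_comp1) (simp add: computable_n_proj)
  then have "computable_n 2 (\<lambda>xs. rec_nat (xs ! 1) (\<lambda>_. f) (xs ! 0))"
    by (intro computable_n_rec_nat2[of "\<lambda>x. x" "\<lambda>_ y _. f y"] computable_n_hd)
  ultimately have "computable_n 2 (\<lambda>xs. (f ^^ (xs ! 0)) (xs ! 1))" by simp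
  then show ?thesis using assms(2,3) by (rule computable_comp2)
qed

lemma prod_decode_triangle_root:
  fixes z :: nat
  defines "t \<equiv> LEAST s. z < triangle (Suc s)"
  shows "prod_decode z = (z - triangle t, t - (z - triangle t))"
proof -
  have "z < triangle (Suc z)" by simp
  then have t_above: "z < triangle (Suc t)" unfolding t_def by (rule LeastI)
  have t_below: "triangle t \<le> z"
  proof (cases t)
    case (Suc s)
    then have "s < t" by simp
    then have "\<not> z < triangle (Suc s)" unfolding t_def by (rule not_less_Least)
    then show ?thesis using Suc by simp
  qed simp
  have "z - triangle t \<le> t" using t_above t_below by simp
  then have "prod_encode (z - triangle t, t - (z - triangle t)) = triangle t + (z - triangle t)"
    by (simp add: prod_encode_def)
  also have "\<dots> = z" using t_below by simp
  finally have "prod_encode (z - triangle t, t - (z - triangle t)) = z" .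
  then show ?thesis by (metis prod_encode_inverse)
qed

lemma computable_triangle_root: "computable (\<lambda>z. LEAST s. z < triangle (Suc s))"
proof -
  let ?f = "\<lambda>ys. Suc (ys ! 1) - triangle (Suc (ys ! 0))"
  have "computable_n (Suc 0) (\<lambda>xs. LEAST k. ?f (k # xs) = 0)"
  proof (rule computable_n_Least)
    show "computable_n (Suc (Suc 0)) ?f"
      by (intro computable_n_diff computable_n_Suc computable_n_triangle computable_n_proj) auto
    show "\<exists>k. ?f (k # xs) = 0" for xs
      by (rule exI[of _ "xs ! 0"]) simp
  qed
  moreover have "?f (k # xs) = 0 \<longleftrightarrow> hd xs < triangle (Suc k)" if "length xs = 1" for k xs
    using that by (cases xs) auto
  ultimately show ?thesis
    unfolding computable_iff_computable_n One_nat_def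
    by (elim computable_n_cong) (simp add: One_nat_def)
qed

lemma computable_fst_prod_decode: "computable f \<Longrightarrow> computable (\<lambda>x. fst (prod_decode (f x)))"
proof -
  have "computable (\<lambda>z. z - triangle (LEAST s. z < triangle (Suc s)))"
    by (intro computable_diff computable_id computable_triangle computable_triangle_root)
  then have "computable (\<lambda>z. fst (prod_decode z))" by (simp add: prod_decode_triangle_root)
  then show "computable f \<Longrightarrow> computable (\<lambda>x. fst (prod_decode (f x)))" by (rule computable_comp)
qed

lemma computable_snd_prod_decode: "computable f \<Longrightarrow> computable (\<lambda>x. snd (prod_decode (f x)))"
proof -
  have "computable (\<lambda>z. (LEAST s. z < triangle (Suc s)) - (z - triangle (LEAST s. z < triangle (Suc s))))"
    by (intro computable_diff computable_id computable_triangle computable_triangle_root)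
  then have "computable (\<lambda>z. snd (prod_decode z))" by (simp add: prod_decode_triangle_root)
  then show "computable f \<Longrightarrow> computable (\<lambda>x. snd (prod_decode (f x)))" by (rule computable_comp)
qed

definition decidable_pred :: "(nat \<Rightarrow> bool) \<Rightarrow> bool" where
  "decidable_pred P \<longleftrightarrow> computable (\<lambda>x. of_bool (P x))"

abbreviation decidable_rel :: "(nat \<Rightarrow> nat \<Rightarrow> bool) \<Rightarrow> bool" where
  "decidable_rel P \<equiv> decidable_pred (\<lambda>z. P (fst (prod_decode z)) (snd (prod_decode z)))"

lemma decidable_set_iff_pred: "decidable_set A \<longleftrightarrow> decidable_pred (\<lambda>x. x \<in> A)"
  unfolding decidable_set_def decidable_pred_def of_bool_def ..

lemma decidable_comp: "decidable_pred P \<Longrightarrow> computable h \<Longrightarrow> decidable_pred (\<lambda>x. P (h x))"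
  unfolding decidable_pred_def by (rule computable_comp)

lemma decidable_mem: "decidable_set A \<Longrightarrow> computable f \<Longrightarrow> decidable_pred (\<lambda>x. f x \<in> A)"
  unfolding decidable_set_iff_pred by (rule decidable_comp)

lemma decidable_not: "decidable_pred P \<Longrightarrow> decidable_pred (\<lambda>x. \<not> P x)"
proof -
  assume "decidable_pred P"
  then have "computable (\<lambda>x. 1 - of_bool (P x))"
    unfolding decidable_pred_def by (intro computable_diff computable_const)
  moreover have "1 - of_bool b = (of_bool (\<not> b) :: nat)" for b by simp
  ultimately show ?thesis unfolding decidable_pred_def by simp
qed

lemma decidable_conj: "decidable_pred P \<Longrightarrow> decidable_pred Q \<Longrightarrow> decidable_pred (\<lambda>x. P x \<and> Q x)"
  unfolding decidable_pred_def of_bool_conj by (rule computable_mult)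

lemma decidable_disj: "decidable_pred P \<Longrightarrow> decidable_pred Q \<Longrightarrow> decidable_pred (\<lambda>x. P x \<or> Q x)"
  using decidable_not[OF decidable_conj[OF decidable_not decidable_not]] by simp

lemma decidable_less: "computable f \<Longrightarrow> computable g \<Longrightarrow> decidable_pred (\<lambda>x. f x < g x)"
proof -
  assume "computable f" "computable g"
  then have "computable (\<lambda>x. 1 - (1 - (g x - f x)))" by (intro computable_diff computable_const)
  moreover have "1 - (1 - (b - a)) = of_bool (a < b)" for a b :: nat by simp
  ultimately show ?thesis unfolding decidable_pred_def by simp
qed

lemma decidable_le: "computable f \<Longrightarrow> computable g \<Longrightarrow> decidable_pred (\<lambda>x. f x \<le> g x)"
  using decidable_not[OF decidable_less] by (simp add: not_less)

lemma decidable_eq: "computable f \<Longrightarrow> computable g \<Longrightarrow> decidable_pred (\<lambda>x. f x = g x)"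
  using decidable_conj[OF decidable_le decidable_le] by (simp add: order_eq_iff)

lemma computable_If:
  assumes "decidable_pred P" "computable f" "computable g"
  shows "computable (\<lambda>x. if P x then f x else g x)"
proof -
  have "computable (\<lambda>x. of_bool (P x) * f x + (1 - of_bool (P x)) * g x)"
    using assms unfolding decidable_pred_def
    by (intro computable_add computable_mult computable_diff computable_const)
  moreover have "of_bool (P x) * f x + (1 - of_bool (P x)) * g x = (if P x then f x else g x)" for x
    by (cases "P x") simp_all
  ultimately show ?thesis by simp
qed

lemma computable_Least:
  assumes "decidable_rel P" and "\<And>x. \<exists>i. P i x"
  shows "computable (\<lambda>x. LEAST i. P i x)"
proof -
  define h where "h z = (1::nat) - of_bool (P (fst (prod_decode z)) (snd (prod_decode z)))" for z
  have "computable h"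
    using assms(1) unfolding h_def decidable_pred_def by (intro computable_diff computable_const)
  then have "computable_n 2 (\<lambda>ys. h (prod_encode (ys ! 0, ys ! 1)))"
    unfolding computable_iff_computable_n
    by (rule computable_n_comp1) (simp add: computable_n_prod_encode computable_n_proj)
  moreover have h_eq_0: "h (prod_encode (i, x)) = 0 \<longleftrightarrow> P i x" for i x by (simp add: h_def)
  ultimately have "computable_n (Suc 0) (\<lambda>xs. LEAST i. h (prod_encode ((i # xs) ! 0, (i # xs) ! 1)) = 0)"
    using assms(2) by (intro computable_n_Least) (simp_all add: numeral_2_eq_2)
  then show ?thesis
    unfolding computable_iff_computable_n One_nat_def
    by (elim computable_n_cong) (auto simp: h_eq_0 length_Suc_conv)
qed

lemma decidable_ball:
  assumes "decidable_rel P" and "computable b"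
  shows "decidable_pred (\<lambda>x. \<forall>i<b x. P i x)"
proof -
  have "decidable_rel (\<lambda>i x. i = b x \<or> \<not> P i x)"
    by (intro decidable_disj decidable_eq decidable_not assms(1) computable_fst_prod_decode
        computable_snd_prod_decode computable_comp[OF assms(2)] computable_id)
  then have "computable (\<lambda>x. LEAST i. i = b x \<or> \<not> P i x)"
    by (rule computable_Least[where P = "\<lambda>i x. i = b x \<or> \<not> P i x"]) blast
  then have "decidable_pred (\<lambda>x. (LEAST i. i = b x \<or> \<not> P i x) = b x)"
    using assms(2) by (rule decidable_eq)
  moreover have "(LEAST i. i = b x \<or> \<not> P i x) = b x \<longleftrightarrow> (\<forall>i<b x. P i x)" for x
  proof
    assume least: "(LEAST i. i = b x \<or> \<not> P i x) = b x"
    show "\<forall>i<b x. P i x"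
    proof (intro allI impI)
      fix i assume "i < b x"
      then have "i < (LEAST i. i = b x \<or> \<not> P i x)" using least by simp
      then have "\<not> (i = b x \<or> \<not> P i x)" by (rule not_less_Least)
      then show "P i x" by simp
    qed
  next
    assume all: "\<forall>i<b x. P i x"
    show "(LEAST i. i = b x \<or> \<not> P i x) = b x"
    proof (rule Least_equality)
      show "b x \<le> i" if "i = b x \<or> \<not> P i x" for i
        using that all leI by blast
    qed simp
  qed
  ultimately show ?thesis by (simp only:)
qed

lemma sigma01I:
  assumes "decidable_rel P" and "\<And>x. x \<in> A \<longleftrightarrow> (\<exists>y. P x y)"
  shows "sigma01 A"
  unfolding sigma01_def
proof (intro exI conjI allI)
  show "decidable_set {z. P (fst (prod_decode z)) (snd (prod_decode z))}"
    using assms(1) unfolding decidable_set_iff_pred by simp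
  show "x \<in> A \<longleftrightarrow> (\<exists>y. prod_encode (x, y) \<in> {z. P (fst (prod_decode z)) (snd (prod_decode z))})" for x
    using assms(2) by simp
qed

section \<open>Lists coded by natural numbers\<close>

lemma list_encode_tl:
  "list_encode (tl (list_decode c)) = (if c = 0 then 0 else snd (prod_decode (c - 1)))"
  by (cases c) (auto split: prod.split)

lemma list_encode_drop:
  "list_encode (drop i (list_decode c)) = ((\<lambda>c. list_encode (tl (list_decode c))) ^^ i) c"
proof (induction i arbitrary: c)
  case (Suc i)
  have "drop (Suc i) (list_decode c) = drop i (list_decode (list_encode (tl (list_decode c))))"
    by (simp add: drop_Suc)
  then show ?case using Suc.IH by (simp only: funpow_Suc_right comp_def)
qed simp

lemma computable_list_tl: "computable f \<Longrightarrow> computable (\<lambda>x. list_encode (tl (list_decode (f x))))"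
  unfolding list_encode_tl
  by (intro computable_If decidable_eq computable_snd_prod_decode computable_diff computable_const)

lemma computable_list_drop:
  "computable f \<Longrightarrow> computable g \<Longrightarrow> computable (\<lambda>x. list_encode (drop (f x) (list_decode (g x))))"
  unfolding list_encode_drop by (intro computable_funpow computable_list_tl computable_id)

lemma computable_length: "computable f \<Longrightarrow> computable (\<lambda>x. length (list_decode (f x)))"
proof -
  have "length xs = (LEAST i. list_encode (drop i xs) = 0)" for xs :: "nat list"
    by (rule Least_equality[symmetric]) (auto simp: list_encode_eq[of _ "[]", simplified])
  moreover have "computable (\<lambda>c. LEAST i. list_encode (drop i (list_decode c)) = 0)"
  proof (rule computable_Least[where P = "\<lambda>i c. list_encode (drop i (list_decode c)) = 0"])
    show "decidable_rel (\<lambda>i c. list_encode (drop i (list_decode c)) = 0)"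
      by (intro decidable_eq computable_list_drop computable_fst_prod_decode computable_snd_prod_decode
          computable_id computable_const)
    show "\<exists>i. list_encode (drop i (list_decode c)) = 0" for c
      by (rule exI[of _ "length (list_decode c)"]) simp
  qed
  ultimately show "computable f \<Longrightarrow> ?thesis" using computable_comp by fastforce
qed

text \<open>A total substitute for \<^term>\<open>list_decode c ! i\<close>, whose value is unspecified, and so
  not provably computable, when \<open>i\<close> is out of range.\<close>
definition code_nth :: "nat \<Rightarrow> nat \<Rightarrow> nat" where
  "code_nth c i = fst (prod_decode (list_encode (drop i (list_decode c)) - 1))"

lemma code_nth_eq_nth: "i < length (list_decode c) \<Longrightarrow> code_nth c i = list_decode c ! i"
  unfolding code_nth_def by (simp add: Cons_nth_drop_Suc[symmetric])

lemma computable_code_nth: "computable f \<Longrightarrow> computable g \<Longrightarrow> computable (\<lambda>x. code_nth (f x) (g x))"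
  unfolding code_nth_def
  by (intro computable_fst_prod_decode computable_diff computable_list_drop computable_const)

lemma list_decode_eq_take_iff:
  "list_decode t = take k (list_decode c) \<longleftrightarrow>
     length (list_decode t) = min k (length (list_decode c)) \<and>
     (\<forall>j<length (list_decode t). code_nth t j = code_nth c j)"
  by (auto simp: list_eq_iff_nth_eq code_nth_eq_nth)

lemma computable_list_take:
  "computable f \<Longrightarrow> computable g \<Longrightarrow> computable (\<lambda>x. list_encode (take (f x) (list_decode (g x))))"
proof -
  let ?P = "\<lambda>t p. list_decode t = take (fst (prod_decode p)) (list_decode (snd (prod_decode p)))"
  have "list_encode (take k xs) = (LEAST t. list_decode t = take k xs)" for k xs
    by (rule Least_equality[symmetric]) (simp, metis list_decode_inverse order_refl)
  moreover have "computable (\<lambda>p. LEAST t. ?P t p)"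
  proof (rule computable_Least[where P = ?P])
    show "decidable_rel ?P"
      unfolding list_decode_eq_take_iff
      by (intro decidable_conj decidable_eq decidable_ball computable_length computable_min
          computable_code_nth computable_fst_prod_decode computable_snd_prod_decode computable_id)
    show "\<exists>t. ?P t p" for p by (rule exI[of _ "list_encode (take _ _)"]) simp
  qed
  ultimately show "computable f \<Longrightarrow> computable g \<Longrightarrow> ?thesis"
    using computable_comp[OF _ computable_prod_encode] by fastforce
qed

lemma computable_list_encode_pair:
  "computable f \<Longrightarrow> computable g \<Longrightarrow> computable (\<lambda>x. list_encode [f x, g x])"
  by (simp, intro computable_Suc computable_prod_encode computable_const)

lemma decidable_ball_list:
  assumes "decidable_rel P" and "computable f"
  shows "decidable_pred (\<lambda>x. \<forall>y\<in>set (list_decode (f x)). P y x)"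
proof -
  have "computable (\<lambda>z. prod_encode (code_nth (f (snd (prod_decode z))) (fst (prod_decode z)), snd (prod_decode z)))"
    by (intro computable_prod_encode computable_code_nth computable_comp[OF assms(2)]
        computable_fst_prod_decode computable_snd_prod_decode computable_id)
  from decidable_comp[OF assms(1) this] have "decidable_rel (\<lambda>j x. P (code_nth (f x) j) x)"
    by simp
  then have "decidable_pred (\<lambda>x. \<forall>j<length (list_decode (f x)). P (code_nth (f x) j) x)"
    using assms(2) by (intro decidable_ball[where P = "\<lambda>j x. P (code_nth (f x) j) x"] computable_length)
  moreover have "(\<forall>j<length (list_decode c). P (code_nth c j) x) \<longleftrightarrow> (\<forall>y\<in>set (list_decode c). P y x)"
    for c x by (auto simp: code_nth_eq_nth all_set_conv_all_nth)
  ultimately show ?thesis by simp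
qed

lemma decidable_bex_list:
  assumes "decidable_rel P" and "computable f"
  shows "decidable_pred (\<lambda>x. \<exists>y\<in>set (list_decode (f x)). P y x)"
proof -
  have "decidable_pred (\<lambda>x. \<forall>y\<in>set (list_decode (f x)). \<not> P y x)"
    using decidable_not[OF assms(1)] assms(2) by (rule decidable_ball_list[where P = "\<lambda>y x. \<not> P y x"])
  then show ?thesis using decidable_not by fastforce
qed

section \<open>Decidable conditions on coded tileset graphs\<close>

lemma edge_decode_eq:
  "edge_decode d =
     (fst (prod_decode d), fst (prod_decode (snd (prod_decode d))), snd (prod_decode (snd (prod_decode d))))"
  unfolding edge_decode_def by (simp add: case_prod_beta)

lemma computable_edge_decode:
  assumes "computable f"
  shows "computable (\<lambda>x. fst (edge_decode (f x)))" and "computable (\<lambda>x. fst (snd (edge_decode (f x))))"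
    and "computable (\<lambda>x. snd (snd (edge_decode (f x))))"
  unfolding edge_decode_eq fst_conv snd_conv
  by (intro computable_fst_prod_decode computable_snd_prod_decode assms)+

lemma set_code_edges: "set (code_edges c) = edge_decode ` set (list_decode (snd (prod_decode c)))"
  unfolding code_edges_def by simp

lemma decidable_mem_code_edges:
  assumes "computable a" "computable b" "computable k" "computable c"
  shows "decidable_pred (\<lambda>x. (a x, b x, k x) \<in> set (code_edges (c x)))"
proof -
  have "(a x, b x, k x) \<in> set (code_edges (c x)) \<longleftrightarrow>
    (\<exists>d\<in>set (list_decode (snd (prod_decode (c x)))). fst (edge_decode d) = a x \<and>
       fst (snd (edge_decode d)) = b x \<and> snd (snd (edge_decode d)) = k x)" for x
    unfolding set_code_edges by (force simp: prod_eq_iff)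
  moreover have "decidable_pred (\<lambda>x. \<exists>d\<in>set (list_decode (snd (prod_decode (c x)))).
      fst (edge_decode d) = a x \<and> fst (snd (edge_decode d)) = b x \<and> snd (snd (edge_decode d)) = k x)"
    by (intro decidable_bex_list decidable_conj decidable_eq computable_edge_decode
        computable_fst_prod_decode computable_snd_prod_decode computable_id
        computable_comp[OF assms(1)] computable_comp[OF assms(2)] computable_comp[OF assms(3)]
        computable_comp[OF assms(4)])
  ultimately show ?thesis by simp
qed

lemma decidable_valid_code: "decidable_pred (\<lambda>c. valid_code gens c)"
proof -
  have "valid_code gens c \<longleftrightarrow>
    (\<forall>d\<in>set (list_decode (snd (prod_decode c))). fst (edge_decode d) < fst (prod_decode c) \<and>
       fst (snd (edge_decode d)) < fst (prod_decode c) \<and> snd (snd (edge_decode d)) < 2 * length gens)" for c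
    unfolding valid_code_def set_code_edges code_tiles_def valid_letter_def by (auto simp: split_beta)
  moreover have "decidable_pred (\<lambda>c. \<forall>d\<in>set (list_decode (snd (prod_decode c))).
      fst (edge_decode d) < fst (prod_decode c) \<and> fst (snd (edge_decode d)) < fst (prod_decode c) \<and>
      snd (snd (edge_decode d)) < 2 * length gens)"
    by (intro decidable_ball_list decidable_conj decidable_less computable_edge_decode
        computable_fst_prod_decode computable_snd_prod_decode computable_id computable_const)
  ultimately show ?thesis by simp
qed

text \<open>Over valid letters, \<open>[k, k'] \<in> W\<close> says that the letter \<open>k'\<close> denotes the inverse of \<open>k\<close>.\<close>
definition edges_reversible :: "nat set \<Rightarrow> nat \<Rightarrow> bool" where
  "edges_reversible W c \<longleftrightarrow>
     (\<forall>(a, a', k)\<in>set (code_edges c). \<exists>k'. (a', a, k') \<in> set (code_edges c) \<and> list_encode [k, k'] \<in> W)"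

lemma decidable_edges_reversible:
  assumes "decidable_set W"
  shows "decidable_pred (\<lambda>c. edges_reversible W c)"
proof -
  let ?E = "\<lambda>c. set (list_decode (snd (prod_decode c)))"
  have "edges_reversible W c \<longleftrightarrow>
    (\<forall>d\<in>?E c. \<exists>d'\<in>?E c. fst (edge_decode d') = fst (snd (edge_decode d)) \<and>
       fst (snd (edge_decode d')) = fst (edge_decode d) \<and>
       list_encode [snd (snd (edge_decode d)), snd (snd (edge_decode d'))] \<in> W)" for c
    unfolding edges_reversible_def set_code_edges by (force simp: prod_eq_iff)
  moreover have "decidable_pred (\<lambda>c. \<forall>d\<in>?E c. \<exists>d'\<in>?E c. fst (edge_decode d') = fst (snd (edge_decode d)) \<and>
       fst (snd (edge_decode d')) = fst (edge_decode d) \<and>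
       list_encode [snd (snd (edge_decode d)), snd (snd (edge_decode d'))] \<in> W)"
    by (intro decidable_ball_list decidable_bex_list decidable_conj decidable_eq decidable_mem[OF assms]
        computable_list_encode_pair computable_edge_decode computable_fst_prod_decode
        computable_snd_prod_decode computable_id)
  ultimately show ?thesis by simp
qed

text \<open>\<open>zs\<close> lists the tiles \<open>\<zeta>(0), \<dots>, \<zeta>(n)\<close> and \<open>ws\<close> the letters of the steps \<open>d\<omega>\<^sub>i\<close>,
  from which \<open>\<omega>\<close> is recovered as the values of the prefixes of \<open>ws\<close>.\<close>
definition ouroboros_witness :: "nat set \<Rightarrow> nat \<Rightarrow> nat list \<Rightarrow> nat list \<Rightarrow> bool" where
  "ouroboros_witness W c zs ws \<longleftrightarrow>
     3 \<le> length ws \<and> length zs = Suc (length ws) \<and>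
     (\<forall>t<length ws. (zs ! t, zs ! Suc t, ws ! t) \<in> set (code_edges c)) \<and>
     list_encode ws \<in> W \<and>
     (\<forall>j<length ws. \<forall>i<j. list_encode (take (j - i) (drop i ws)) \<notin> W)"

lemma ouroboros_witness_code_iff:
  "ouroboros_witness W c (list_decode Z) (list_decode V) \<longleftrightarrow>
     3 \<le> length (list_decode V) \<and> length (list_decode Z) = Suc (length (list_decode V)) \<and>
     (\<forall>t<length (list_decode V). (code_nth Z t, code_nth Z (Suc t), code_nth V t) \<in> set (code_edges c)) \<and>
     V \<in> W \<and>
     (\<forall>j<length (list_decode V). \<forall>i<j.
        list_encode (take (j - i) (list_decode (list_encode (drop i (list_decode V))))) \<notin> W)"
  by (auto simp: ouroboros_witness_def code_nth_eq_nth)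

lemma decidable_ouroboros_witness:
  assumes "decidable_set W"
  shows "decidable_rel (\<lambda>c y. ouroboros_witness W c
    (list_decode (fst (prod_decode y))) (list_decode (snd (prod_decode y))))"
  unfolding ouroboros_witness_code_iff
  by (intro decidable_conj decidable_le decidable_eq decidable_ball decidable_not decidable_mem[OF assms]
      decidable_mem_code_edges computable_list_take computable_list_drop computable_diff computable_code_nth
      computable_length computable_Suc computable_fst_prod_decode computable_snd_prod_decode
      computable_id computable_const)

section \<open>Ouroboroi and their certificates\<close>

lemma word_val_Nil [simp]: "word_val G gens [] = \<one>\<^bsub>G\<^esub>"
  by (simp add: word_val_def)

lemma word_val_Cons [simp]: "word_val G gens (k # w) = letter_val G gens k \<otimes>\<^bsub>G\<^esub> word_val G gens w"
  by (simp add: word_val_def)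

lemma mem_code_graph_iff:
  "(a, a', s) \<in> code_graph G gens c \<longleftrightarrow> (\<exists>k. (a, a', k) \<in> set (code_edges c) \<and> letter_val G gens k = s)"
  unfolding code_graph_def by force

lemma valid_code_edgeD:
  "valid_code gens c \<Longrightarrow> (a, a', k) \<in> set (code_edges c) \<Longrightarrow>
     a \<in> code_tiles c \<and> a' \<in> code_tiles c \<and> valid_letter gens k"
  unfolding valid_code_def by blast

lemma witness_tiles:
  assumes "valid_code gens c" and "ouroboros_witness W c zs ws" and "i \<le> length ws"
  shows "zs ! i \<in> code_tiles c"
proof -
  have edge: "\<And>t. t < length ws \<Longrightarrow> (zs ! t, zs ! Suc t, ws ! t) \<in> set (code_edges c)"
    and "3 \<le> length ws"
    using assms(2) unfolding ouroboros_witness_def by blast+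
  show ?thesis
  proof (cases "i < length ws")
    case True
    then show ?thesis using edge valid_code_edgeD[OF assms(1)] by blast
  next
    case False
    then have "i = Suc (length ws - 1)" "length ws - 1 < length ws" using assms(3) \<open>3 \<le> length ws\<close> by auto
    then show ?thesis using edge valid_code_edgeD[OF assms(1)] by metis
  qed
qed

locale group_gens = group G for G :: "('a, 'b) monoid_scheme" (structure) +
  fixes gens :: "'a list"
  assumes gens_closed: "set gens \<subseteq> carrier G"
begin

abbreviation valid_word :: "nat list \<Rightarrow> bool" where
  "valid_word w \<equiv> \<forall>k\<in>set w. valid_letter gens k"

lemma letter_val_closed: "valid_letter gens k \<Longrightarrow> letter_val G gens k \<in> carrier G"
  unfolding letter_val_def valid_letter_def using gens_closed nth_mem by auto

lemma letter_val_mem: "valid_letter gens k \<Longrightarrow> letter_val G gens k \<in> set gens \<union> m_inv G ` set gens"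
  unfolding letter_val_def valid_letter_def using nth_mem by auto

lemma word_val_closed: "valid_word w \<Longrightarrow> word_val G gens w \<in> carrier G"
  by (induction w) (auto intro: letter_val_closed)

lemma word_val_append:
  "valid_word w \<Longrightarrow> valid_word w' \<Longrightarrow> word_val G gens (w @ w') = word_val G gens w \<otimes> word_val G gens w'"
  by (induction w) (auto simp: m_assoc letter_val_closed word_val_closed)

lemma list_encode_mem_word_problem:
  "list_encode w \<in> word_problem G gens \<longleftrightarrow> valid_word w \<and> word_val G gens w = \<one>"
  unfolding word_problem_def by simp

lemma pair_mem_word_problem_iff:
  assumes "valid_letter gens k" "valid_letter gens k'"
  shows "list_encode [k, k'] \<in> word_problem G gens \<longleftrightarrow> letter_val G gens k' = inv (letter_val G gens k)"
proof -
  have "a \<otimes> b = \<one> \<longleftrightarrow> b = inv a" if "a \<in> carrier G" "b \<in> carrier G" for a b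
    using that by (metis inv_comm inv_equality r_inv)
  then show ?thesis
    using assms letter_val_closed by (simp add: list_encode_mem_word_problem del: list_encode.simps)
qed

lemma word_val_take_Suc:
  assumes "valid_word ws" and "i < length ws"
  shows "inv (word_val G gens (take i ws)) \<otimes> word_val G gens (take (Suc i) ws) = letter_val G gens (ws ! i)"
proof -
  have "valid_word (take i ws)" and letter: "valid_letter gens (ws ! i)"
    using assms by (auto dest: in_set_takeD)
  then have "word_val G gens (take (Suc i) ws) = word_val G gens (take i ws) \<otimes> letter_val G gens (ws ! i)"
    using assms(2) by (simp add: take_Suc_conv_app_nth word_val_append letter_val_closed)
  then show ?thesis
    using word_val_closed[OF \<open>valid_word (take i ws)\<close>] letter_val_closed[OF letter]
    by (simp add: m_assoc[symmetric])
qed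

lemma word_val_segment:
  assumes "valid_word ws" and closed: "\<And>i. i \<le> length ws \<Longrightarrow> \<omega> i \<in> carrier G"
    and steps: "\<And>i. i < length ws \<Longrightarrow> letter_val G gens (ws ! i) = inv (\<omega> i) \<otimes> \<omega> (Suc i)"
    and "i + j \<le> length ws"
  shows "word_val G gens (take j (drop i ws)) = inv (\<omega> i) \<otimes> \<omega> (i + j)"
  using assms(4)
proof (induction j)
  case 0
  then show ?case using closed by simp
next
  case (Suc j)
  then have ij: "i + j < length ws" by simp
  have "take (Suc j) (drop i ws) = take j (drop i ws) @ [ws ! (i + j)]"
    using ij by (simp add: take_Suc_conv_app_nth)
  moreover have "valid_word (take j (drop i ws))" "valid_letter gens (ws ! (i + j))"
    using assms(1) ij by (auto dest: in_set_takeD in_set_dropD)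
  ultimately have "word_val G gens (take (Suc j) (drop i ws)) =
      word_val G gens (take j (drop i ws)) \<otimes> letter_val G gens (ws ! (i + j))"
    by (simp add: word_val_append letter_val_closed)
  also have "\<dots> = inv (\<omega> i) \<otimes> \<omega> (i + j) \<otimes> (inv (\<omega> (i + j)) \<otimes> \<omega> (Suc (i + j)))"
    using Suc ij steps by simp
  also have "\<dots> = inv (\<omega> i) \<otimes> \<omega> (i + Suc j)"
    using closed ij by (simp add: m_assoc[symmetric]) (simp add: m_assoc)
  finally show ?case .
qed

lemma code_graph_subset:
  assumes "valid_code gens c"
  shows "code_graph G gens c \<subseteq> code_tiles c \<times> code_tiles c \<times> (set gens \<union> m_inv G ` set gens)"
proof
  fix e assume "e \<in> code_graph G gens c"
  then obtain a a' k where "e = (a, a', letter_val G gens k)" "(a, a', k) \<in> set (code_edges c)"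
    unfolding code_graph_def by auto
  then show "e \<in> code_tiles c \<times> code_tiles c \<times> (set gens \<union> m_inv G ` set gens)"
    using valid_code_edgeD[OF assms] letter_val_mem by blast
qed

lemma code_graph_symmetric_iff_edges_reversible:
  assumes "valid_code gens c"
  shows "(\<forall>a a' s. (a, a', s) \<in> code_graph G gens c \<longrightarrow> (a', a, inv s) \<in> code_graph G gens c) \<longleftrightarrow>
    edges_reversible (word_problem G gens) c"
proof
  assume sym: "\<forall>a a' s. (a, a', s) \<in> code_graph G gens c \<longrightarrow> (a', a, inv s) \<in> code_graph G gens c"
  show "edges_reversible (word_problem G gens) c"
    unfolding edges_reversible_def
  proof clarify
    fix a a' k assume e: "(a, a', k) \<in> set (code_edges c)"
    then have "(a, a', letter_val G gens k) \<in> code_graph G gens c"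
      by (auto simp: mem_code_graph_iff)
    then have "(a', a, inv (letter_val G gens k)) \<in> code_graph G gens c"
      using sym by blast
    then obtain k' where "(a', a, k') \<in> set (code_edges c)" "letter_val G gens k' = inv (letter_val G gens k)"
      by (auto simp: mem_code_graph_iff)
    then show "\<exists>k'. (a', a, k') \<in> set (code_edges c) \<and> list_encode [k, k'] \<in> word_problem G gens"
      using e valid_code_edgeD[OF assms] pair_mem_word_problem_iff by blast
  qed
next
  assume rev: "edges_reversible (word_problem G gens) c"
  show "\<forall>a a' s. (a, a', s) \<in> code_graph G gens c \<longrightarrow> (a', a, inv s) \<in> code_graph G gens c"
  proof (intro allI impI)
    fix a a' s assume "(a, a', s) \<in> code_graph G gens c"
    then obtain k where e: "(a, a', k) \<in> set (code_edges c)" and s: "s = letter_val G gens k"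
      by (auto simp: mem_code_graph_iff)
    then obtain k' where e': "(a', a, k') \<in> set (code_edges c)" and "list_encode [k, k'] \<in> word_problem G gens"
      using rev unfolding edges_reversible_def by blast
    then have "letter_val G gens k' = inv s"
      using e s valid_code_edgeD[OF assms] pair_mem_word_problem_iff by blast
    then show "(a', a, inv s) \<in> code_graph G gens c"
      using e' by (auto simp: mem_code_graph_iff)
  qed
qed

lemma tileset_graph_iff_edges_reversible:
  assumes "valid_code gens c"
  shows "tileset_graph G (set gens) (code_tiles c) (code_graph G gens c) \<longleftrightarrow>
    edges_reversible (word_problem G gens) c"
proof -
  have "finite (code_tiles c)" "finite (code_graph G gens c)"
    unfolding code_tiles_def code_graph_def by simp_all
  then show ?thesis
    using code_graph_subset[OF assms] code_graph_symmetric_iff_edges_reversible[OF assms]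
    unfolding tileset_graph_def by blast
qed

lemma ouroboros_of_witness:
  assumes valid: "valid_code gens c" and wit: "ouroboros_witness (word_problem G gens) c zs ws"
  shows "is_ouroboros G (set gens) (code_tiles c) (code_graph G gens c) (length ws)
    (\<lambda>i. word_val G gens (take i ws)) (\<lambda>i. zs ! i)"
proof -
  define n where "n = length ws"
  define \<omega> where "\<omega> i = word_val G gens (take i ws)" for i
  have n3: "3 \<le> n"
    and edge: "\<And>t. t < n \<Longrightarrow> (zs ! t, zs ! Suc t, ws ! t) \<in> set (code_edges c)"
    and word: "valid_word ws" "word_val G gens ws = \<one>"
    and segment: "\<And>i j. i < j \<Longrightarrow> j < n \<Longrightarrow> list_encode (take (j - i) (drop i ws)) \<notin> word_problem G gens"
    using wit unfolding ouroboros_witness_def n_def list_encode_mem_word_problem by blast+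
  have closed: "\<omega> i \<in> carrier G" for i
    unfolding \<omega>_def using word(1) by (intro word_val_closed) (auto dest: in_set_takeD)
  have step: "letter_val G gens (ws ! i) = inv (\<omega> i) \<otimes> \<omega> (Suc i)" if "i < n" for i
    unfolding \<omega>_def using word_val_take_Suc[OF word(1)] that n_def by simp
  have "\<omega> i \<noteq> \<omega> j" if "i < j" "j < n" for i j
  proof
    assume "\<omega> i = \<omega> j"
    then have "word_val G gens (take (j - i) (drop i ws)) = \<one>"
      using word_val_segment[OF word(1) closed step, of i "j - i"] that closed n_def by simp
    moreover have "valid_word (take (j - i) (drop i ws))"
      using word(1) by (auto dest: in_set_takeD in_set_dropD)
    ultimately show False
      using segment[OF that] by (simp add: list_encode_mem_word_problem)
  qed
  then have "inj_on \<omega> {0..<n}"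
    by (intro inj_onI) (metis atLeastLessThan_iff linorder_neqE_nat)
  moreover have "zs ! i \<in> code_tiles c" if "i \<le> n" for i
    using witness_tiles[OF valid wit] that n_def by simp
  moreover have "inv (\<omega> i) \<otimes> \<omega> (Suc i) \<in> set gens \<union> m_inv G ` set gens"
    and "(zs ! i, zs ! Suc i, inv (\<omega> i) \<otimes> \<omega> (Suc i)) \<in> code_graph G gens c" if "i < n" for i
    using step[OF that] edge[OF that] valid_code_edgeD[OF valid] letter_val_mem
    by (metis, auto simp: mem_code_graph_iff)
  moreover have "\<omega> n = \<omega> 0" unfolding \<omega>_def n_def using word(2) by simp
  ultimately show ?thesis
    unfolding is_ouroboros_def n_def[symmetric] \<omega>_def[symmetric] using n3 closed by blast
qed

lemma witness_of_ouroboros: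
  assumes valid: "valid_code gens c"
    and ouro: "is_ouroboros G (set gens) (code_tiles c) (code_graph G gens c) n \<omega> \<zeta>"
  shows "\<exists>ws. ouroboros_witness (word_problem G gens) c (map \<zeta> [0..<Suc n]) ws"
proof -
  have n3: "3 \<le> n" and closed: "\<And>i. i \<le> n \<Longrightarrow> \<omega> i \<in> carrier G" and inj: "inj_on \<omega> {0..<n}"
    and closes: "\<omega> n = \<omega> 0"
    and edge: "\<And>i. i < n \<Longrightarrow> (\<zeta> i, \<zeta> (Suc i), inv (\<omega> i) \<otimes> \<omega> (Suc i)) \<in> code_graph G gens c"
    using ouro unfolding is_ouroboros_def by blast+
  obtain \<kappa> where \<kappa>: "\<And>i. i < n \<Longrightarrow> (\<zeta> i, \<zeta> (Suc i), \<kappa> i) \<in> set (code_edges c) \<and>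
      letter_val G gens (\<kappa> i) = inv (\<omega> i) \<otimes> \<omega> (Suc i)"
    using edge unfolding mem_code_graph_iff by metis
  define ws where "ws = map \<kappa> [0..<n]"
  have len: "length ws = n" unfolding ws_def by simp
  have valid_ws: "valid_word ws"
    unfolding ws_def using \<kappa> valid_code_edgeD[OF valid] by fastforce
  have segment: "word_val G gens (take j (drop i ws)) = inv (\<omega> i) \<otimes> \<omega> (i + j)" if "i + j \<le> n" for i j
    using word_val_segment[OF valid_ws, of \<omega>] closed \<kappa> that unfolding len by (simp add: ws_def)
  have "word_val G gens ws = \<one>"
    using segment[of 0 n] closed closes n3 len by simp
  moreover have "list_encode (take (j - i) (drop i ws)) \<notin> word_problem G gens" if "i < j" "j < n" for i j
  proof -
    have "\<omega> i \<noteq> \<omega> j" using inj that unfolding inj_on_def by fastforce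
    then have "inv (\<omega> i) \<otimes> \<omega> j \<noteq> \<one>"
      using closed that by (simp add: inv_solve_left')
    then show ?thesis
      using segment[of i "j - i"] that by (simp add: list_encode_mem_word_problem)
  qed
  ultimately have "ouroboros_witness (word_problem G gens) c (map \<zeta> [0..<Suc n]) ws"
    unfolding ouroboros_witness_def list_encode_mem_word_problem len
    using n3 valid_ws \<kappa> by (auto simp: ws_def nth_Cons' simp del: upt_Suc)
  then show ?thesis ..
qed

lemma has_ouroboros_iff_witness:
  assumes "valid_code gens c"
  shows "has_ouroboros G (set gens) (code_tiles c) (code_graph G gens c) \<longleftrightarrow>
    (\<exists>zs ws. ouroboros_witness (word_problem G gens) c zs ws)"
  using ouroboros_of_witness[OF assms] witness_of_ouroboros[OF assms]
  unfolding has_ouroboros_def by blast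

end

theorem proposition2:
  fixes G :: "('a, 'b) monoid_scheme" and S :: "'a set" and gens :: "'a list"
  assumes "group G"
    and "finite S" and "S \<subseteq> carrier G" and "generate G S = carrier G"
    and "set gens = S"
    and "decidable_set (word_problem G gens)"
  shows "sigma01 (ouroboros_problem G gens)"
proof -
  interpret group_gens G gens
    using assms(3,5) by (intro group_gens.intro[OF assms(1)] group_gens_axioms.intro) simp
  let ?W = "word_problem G gens"
  let ?check = "\<lambda>c y. valid_code gens c \<and> edges_reversible ?W c \<and>
    ouroboros_witness ?W c (list_decode (fst (prod_decode y))) (list_decode (snd (prod_decode y)))"
  show ?thesis
  proof (rule sigma01I[where P = ?check])
    show "decidable_rel ?check"
      by (intro decidable_conj decidable_comp[OF decidable_valid_code]
          decidable_comp[OF decidable_edges_reversible[OF assms(6)]] decidable_ouroboros_witness[OF assms(6)]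
          computable_fst_prod_decode computable_id)
    have "(\<exists>zs ws. ouroboros_witness ?W c zs ws) \<longleftrightarrow>
      (\<exists>y. ouroboros_witness ?W c (list_decode (fst (prod_decode y))) (list_decode (snd (prod_decode y))))" for c
      by (metis fst_conv snd_conv prod_encode_inverse list_encode_inverse)
    then show "c \<in> ouroboros_problem G gens \<longleftrightarrow> (\<exists>y. ?check c y)" for c
      unfolding ouroboros_problem_def
      using tileset_graph_iff_edges_reversible has_ouroboros_iff_witness by auto
  qed
qed

end
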